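(* Let $G=(V,E)$ be a finite undirected graph, let $k>2$ be an integer, and let $C$ be a legitimate configuration (as defined in the context). Then: (i) for every node $u\in V$, $d_u=\mathrm{dist}(u,S(C))$; (ii) $S(C)$ is a $(k,k-1)$-ruling set of $G$.
   Context: $\mathrm{dist}(u,v)$ is the graph distance in $G$, $N(u)$ is the set of neighbours of $u$, and for $S\subseteq V$, $\mathrm{dist}(u,S)=\min_{s\in S}\mathrm{dist}(u,s)$. A set $S\subseteq V$ is an $(a,b)$-ruling set if any two distinct nodes of $S$ are at distance at least $a$ and every node of $V$ is at distance at most $b$ from some node of $S$. Let $m=\lfloor k/2\rfloor$. A configuration $C$ assigns to each node $u$ the values $d_u\in\{0,\dots,k-1\}$, $err_u\in\{0,1\}$, and for each $i\in\{1,\dots,m-1\}$ a clock value $c_{i,u}\in\mathbb{Z}/4\mathbb{Z}$ and an arrow $b_{i,u}\in\{\uparrow,\downarrow\}$. Let $S(C)=\{u\in V: d_u=0\}$. Predicates on a node $u$: - $\mathrm{well\_defined}(u)$: $err_u=0$, $|d_u-d_v|\le 1$ for all $v\in N(u)$, and if $d_u>0$ then some $v\in N(u)$ has $d_v=d_u-1$. - $\mathrm{leader\_down}(u)$: if $d_u=0$ then $b_{i,u}=\downarrow$ for all $i\in\{1,\dots,m-1\}$. - $\mathrm{bc\_up}(u,i)$: for every $v\in N(u)$ with $d_v=d_u-1$, $(b_{i,u},b_{i,v},c_{i,v})\in\{(\uparrow,\uparrow,c_{i,u}),(\uparrow,\downarrow,c_{i,u}),(\uparrow,\downarrow,c_{i,u}+1),(\downarrow,\downarrow,c_{i,u})\}$.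 - $\mathrm{bc\_down}(u,i)$: for every $v\in N(u)$ with $d_v=d_u+1$, $(b_{i,u},b_{i,v},c_{i,v})\in\{(\uparrow,\uparrow,c_{i,u}),(\downarrow,\uparrow,c_{i,u}),(\downarrow,\uparrow,c_{i,u}-1),(\downarrow,\downarrow,c_{i,u})\}$. - $\mathrm{branch\_coherence}(u)$: either $d_u\ge m$, or ($\mathrm{bc\_up}(u,d_u)$ holds, and $\mathrm{bc\_up}(u,i)$ and $\mathrm{bc\_down}(u,i)$ hold for all $i\in\{d_u+1,\dots,m-1\}$). (For $d_u=0$ the condition $\mathrm{bc\_up}(u,0)$ is vacuous.) Clock arithmetic is in $\mathbb{Z}/4\mathbb{Z}$. A configuration $C$ is legitimate if every node $u$ satisfies $\mathrm{well\_defined}(u)$, $\mathrm{leader\_down}(u)$ and $\mathrm{branch\_coherence}(u)$, and any two distinct nodes of $S(C)$ are at distance at least $k$ in $G$. *)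

theory Defs
  imports Main "HOL-Library.Numeral_Type" "HOL-Library.Extended_Nat"
begin

definition graph :: "'v set \<Rightarrow> ('v \<Rightarrow> 'v \<Rightarrow> bool) \<Rightarrow> bool" where
  "graph V E \<longleftrightarrow> finite V \<and> (\<forall>u v. E u v \<longrightarrow> E v u)
     \<and> (\<forall>u. \<not> E u u) \<and> (\<forall>u v. E u v \<longrightarrow> u \<in> V \<and> v \<in> V)"

definition nbrs :: "'v set \<Rightarrow> ('v \<Rightarrow> 'v \<Rightarrow> bool) \<Rightarrow> 'v \<Rightarrow> 'v set" where
  "nbrs V E u = {v \<in> V. E u v}"

definition is_walk :: "'v set \<Rightarrow> ('v \<Rightarrow> 'v \<Rightarrow> bool) \<Rightarrow> 'v list \<Rightarrow> bool" where
  "is_walk V E p \<longleftrightarrow> p \<noteq> [] \<and> set p \<subseteq> V \<and> (\<forall>i. Suc i < length p \<longrightarrow> E (p ! i) (p ! Suc i))"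

text \<open>Graph distance (number of edges of a shortest walk); \<infinity> if unreachable.\<close>
definition gdist :: "'v set \<Rightarrow> ('v \<Rightarrow> 'v \<Rightarrow> bool) \<Rightarrow> 'v \<Rightarrow> 'v \<Rightarrow> enat" where
  "gdist V E u v = (INF p \<in> {p. is_walk V E p \<and> hd p = u \<and> last p = v}. enat (length p - 1))"

definition gdist_set :: "'v set \<Rightarrow> ('v \<Rightarrow> 'v \<Rightarrow> bool) \<Rightarrow> 'v \<Rightarrow> 'v set \<Rightarrow> enat" where
  "gdist_set V E u S = (INF s \<in> S. gdist V E u s)"

definition ruling_set :: "'v set \<Rightarrow> ('v \<Rightarrow> 'v \<Rightarrow> bool) \<Rightarrow> nat \<Rightarrow> nat \<Rightarrow> 'v set \<Rightarrow> bool" where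
  "ruling_set V E a b S \<longleftrightarrow> S \<subseteq> V
     \<and> (\<forall>s\<in>S. \<forall>t\<in>S. s \<noteq> t \<longrightarrow> enat a \<le> gdist V E s t)
     \<and> (\<forall>u\<in>V. \<exists>s\<in>S. gdist V E u s \<le> enat b)"

datatype arrow = Up | Down

text \<open>Clock values live in the type 4 (= Z/4Z, arithmetic modulo 4).
  clk i u = c_{i,u}, arr i u = b_{i,u}; err u = True encodes err_u = 1.\<close>
record 'v config =
  dd  :: "'v \<Rightarrow> nat"
  err :: "'v \<Rightarrow> bool"
  clk :: "nat \<Rightarrow> 'v \<Rightarrow> 4"
  arr :: "nat \<Rightarrow> 'v \<Rightarrow> arrow"

definition is_config :: "'v set \<Rightarrow> nat \<Rightarrow> 'v config \<Rightarrow> bool" where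
  "is_config V k C \<longleftrightarrow> (\<forall>u\<in>V. dd C u < k)"

definition Sset :: "'v set \<Rightarrow> 'v config \<Rightarrow> 'v set" where
  "Sset V C = {u \<in> V. dd C u = 0}"

definition well_defined :: "'v set \<Rightarrow> ('v \<Rightarrow> 'v \<Rightarrow> bool) \<Rightarrow> 'v config \<Rightarrow> 'v \<Rightarrow> bool" where
  "well_defined V E C u \<longleftrightarrow> \<not> err C u
     \<and> (\<forall>v\<in>nbrs V E u. \<bar>int (dd C u) - int (dd C v)\<bar> \<le> 1)
     \<and> (dd C u > 0 \<longrightarrow> (\<exists>v\<in>nbrs V E u. int (dd C v) = int (dd C u) - 1))"

definition leader_down :: "nat \<Rightarrow> 'v config \<Rightarrow> 'v \<Rightarrow> bool" where
  "leader_down m C u \<longleftrightarrow> (dd C u = 0 \<longrightarrow> (\<forall>i\<in>{1..<m}. arr C i u = Down))"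

definition bc_up :: "'v set \<Rightarrow> ('v \<Rightarrow> 'v \<Rightarrow> bool) \<Rightarrow> 'v config \<Rightarrow> 'v \<Rightarrow> nat \<Rightarrow> bool" where
  "bc_up V E C u i \<longleftrightarrow> (\<forall>v\<in>nbrs V E u. int (dd C v) = int (dd C u) - 1 \<longrightarrow>
     (arr C i u, arr C i v, clk C i v) \<in>
       {(Up, Up, clk C i u), (Up, Down, clk C i u), (Up, Down, clk C i u + 1),
        (Down, Down, clk C i u)})"

definition bc_down :: "'v set \<Rightarrow> ('v \<Rightarrow> 'v \<Rightarrow> bool) \<Rightarrow> 'v config \<Rightarrow> 'v \<Rightarrow> nat \<Rightarrow> bool" where
  "bc_down V E C u i \<longleftrightarrow> (\<forall>v\<in>nbrs V E u. int (dd C v) = int (dd C u) + 1 \<longrightarrow>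
     (arr C i u, arr C i v, clk C i v) \<in>
       {(Up, Up, clk C i u), (Down, Up, clk C i u), (Down, Up, clk C i u - 1),
        (Down, Down, clk C i u)})"

definition branch_coherence :: "'v set \<Rightarrow> ('v \<Rightarrow> 'v \<Rightarrow> bool) \<Rightarrow> nat \<Rightarrow> 'v config \<Rightarrow> 'v \<Rightarrow> bool" where
  "branch_coherence V E m C u \<longleftrightarrow> dd C u \<ge> m \<or>
     (bc_up V E C u (dd C u) \<and>
      (\<forall>i\<in>{dd C u + 1..<m}. bc_up V E C u i \<and> bc_down V E C u i))"

definition legitimate :: "'v set \<Rightarrow> ('v \<Rightarrow> 'v \<Rightarrow> bool) \<Rightarrow> nat \<Rightarrow> 'v config \<Rightarrow> bool" where
  "legitimate V E k C \<longleftrightarrow>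
     (\<forall>u\<in>V. well_defined V E C u \<and> leader_down (k div 2) C u
             \<and> branch_coherence V E (k div 2) C u)
     \<and> (\<forall>s\<in>Sset V C. \<forall>t\<in>Sset V C. s \<noteq> t \<longrightarrow> enat k \<le> gdist V E s t)"

end

theory Submission
  imports Defs
begin

text \<open>Only the condition well_defined of a legitimate configuration matters: it says that the
  level function d changes by at most one along every edge and that every node of positive level
  has a neighbour one level lower. The first property bounds d from above by the distance to the
  zeros of d (along any walk d drops by at most its length); the second yields, by descending,
  a walk of length exactly d u from u to a zero. Hence d is the distance to S(C), which gives
  covering radius k - 1 because d < k; the separation of S(C) is part of legitimacy.\<close>

lemma is_walk_Cons:
  "is_walk V E (a # q) \<longleftrightarrow> a \<in> V \<and> (q = [] \<or> E a (hd q) \<and> is_walk V E q)"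
  by (cases q) (auto simp: is_walk_def nth_Cons split: nat.splits)

lemma gdist_le_walk_length:
  assumes "is_walk V E p"
  shows "gdist V E (hd p) (last p) \<le> enat (length p - 1)"
  unfolding gdist_def using assms by (intro INF_lower) auto

lemma walk_potential_bound:
  assumes step: "\<And>u v. u \<in> V \<Longrightarrow> v \<in> V \<Longrightarrow> E u v \<Longrightarrow> f u \<le> f v + 1"
    and "is_walk V E p"
  shows "f (hd p) \<le> f (last p) + (length p - 1)"
  using \<open>is_walk V E p\<close>
proof (induction p)
  case Nil
  then show ?case by (simp add: is_walk_def)
next
  case (Cons a q)
  show ?case
  proof (cases "q = []")
    case False
    with Cons.prems have "a \<in> V" "E a (hd q)" "is_walk V E q"
      by (auto simp: is_walk_Cons)
    moreover from \<open>is_walk V E q\<close> \<open>q \<noteq> []\<close> have "hd q \<in> V"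
      by (auto simp: is_walk_def)
    ultimately have "f a \<le> f (hd q) + 1" "f (hd q) \<le> f (last q) + (length q - 1)"
      using step Cons.IH by auto
    with False show ?thesis by (cases q) auto
  qed simp
qed

lemma potential_le_gdist:
  assumes step: "\<And>u v. u \<in> V \<Longrightarrow> v \<in> V \<Longrightarrow> E u v \<Longrightarrow> f u \<le> f v + 1"
    and "f s = 0"
  shows "enat (f u) \<le> gdist V E u s"
  unfolding gdist_def
proof (rule INF_greatest)
  fix p assume "p \<in> {p. is_walk V E p \<and> hd p = u \<and> last p = s}"
  then show "enat (f u) \<le> enat (length p - 1)"
    using walk_potential_bound[where V = V and E = E and f = f and p = p, OF step] \<open>f s = 0\<close> by auto
qed

lemma descending_walk_to_zero:
  assumes descent: "\<And>u. u \<in> V \<Longrightarrow> 0 < f u \<Longrightarrow> \<exists>v\<in>V. E u v \<and> f v + 1 = f u"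
    and "u \<in> V"
  shows "\<exists>p. is_walk V E p \<and> hd p = u \<and> last p \<in> V \<and> f (last p) = 0 \<and> length p = f u + 1"
  using \<open>u \<in> V\<close>
proof (induction "f u" arbitrary: u)
  case 0
  then show ?case by (intro exI[of _ "[u]"]) (auto simp: is_walk_def)
next
  case (Suc n)
  then obtain v where "v \<in> V" "E u v" "f v = n" using descent by fastforce
  with Suc.hyps obtain p where p: "is_walk V E p" "hd p = v" "last p \<in> V" "f (last p) = 0"
    "length p = n + 1" by metis
  then have "p \<noteq> []" by (auto simp: is_walk_def)
  with p Suc show ?case using \<open>E u v\<close>
    by (intro exI[of _ "u # p"]) (auto simp: is_walk_Cons)
qed

lemma gdist_to_zero_le_potential:
  assumes "\<And>u. u \<in> V \<Longrightarrow> 0 < f u \<Longrightarrow> \<exists>v\<in>V. E u v \<and> f v + 1 = f u"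
    and "u \<in> V"
  shows "\<exists>s\<in>V. f s = 0 \<and> gdist V E u s \<le> enat (f u)"
proof -
  obtain p where "is_walk V E p" "hd p = u" "last p \<in> V" "f (last p) = 0" "length p = f u + 1"
    using descending_walk_to_zero[OF assms] by blast
  with gdist_le_walk_length[of V E p] show ?thesis by force
qed

lemma gdist_set_zeros_eq_potential:
  assumes "\<And>u v. u \<in> V \<Longrightarrow> v \<in> V \<Longrightarrow> E u v \<Longrightarrow> f u \<le> f v + 1"
    and "\<And>u. u \<in> V \<Longrightarrow> 0 < f u \<Longrightarrow> \<exists>v\<in>V. E u v \<and> f v + 1 = f u"
    and "u \<in> V"
  shows "gdist_set V E u {s \<in> V. f s = 0} = enat (f u)"
proof (rule antisym)
  obtain s where "s \<in> V" "f s = 0" "gdist V E u s \<le> enat (f u)"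
    using gdist_to_zero_le_potential[OF assms(2,3)] by blast
  then show "gdist_set V E u {s \<in> V. f s = 0} \<le> enat (f u)"
    unfolding gdist_set_def by (intro INF_lower2) auto
  show "enat (f u) \<le> gdist_set V E u {s \<in> V. f s = 0}"
    unfolding gdist_set_def using potential_le_gdist[OF assms(1)] by (intro INF_greatest) auto
qed

lemma legitimate_level_step:
  assumes "legitimate V E k C" "u \<in> V" "v \<in> V" "E u v"
  shows "dd C u \<le> dd C v + 1"
  using assms unfolding legitimate_def well_defined_def nbrs_def by fastforce

lemma legitimate_level_descent:
  assumes "legitimate V E k C" "u \<in> V" "0 < dd C u"
  shows "\<exists>v\<in>V. E u v \<and> dd C v + 1 = dd C u"
  using assms unfolding legitimate_def well_defined_def nbrs_def by fastforce

theorem lemma1: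
  fixes V :: "'v set" and E :: "'v \<Rightarrow> 'v \<Rightarrow> bool" and k :: nat and C :: "'v config"
  assumes "graph V E" and "k > 2" and "is_config V k C" and "legitimate V E k C"
  shows "(\<forall>u\<in>V. enat (dd C u) = gdist_set V E u (Sset V C))
         \<and> ruling_set V E k (k - 1) (Sset V C)"
proof
  note step = legitimate_level_step[OF assms(4)]
  note descent = legitimate_level_descent[OF assms(4)]
  have S: "Sset V C = {s \<in> V. dd C s = 0}" by (simp add: Sset_def)
  show "\<forall>u\<in>V. enat (dd C u) = gdist_set V E u (Sset V C)"
    using gdist_set_zeros_eq_potential[OF step descent] by (simp add: S)
  have "\<exists>s\<in>Sset V C. gdist V E u s \<le> enat (k - 1)" if "u \<in> V" for u
  proof -
    obtain s where "s \<in> V" "dd C s = 0" "gdist V E u s \<le> enat (dd C u)"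
      using gdist_to_zero_le_potential[OF descent \<open>u \<in> V\<close>] by blast
    moreover have "dd C u \<le> k - 1" using assms(3) \<open>u \<in> V\<close> by (auto simp: is_config_def)
    ultimately show ?thesis by (metis (mono_tags) S enat_ord_simps(1) mem_Collect_eq order_trans)
  qed
  then show "ruling_set V E k (k - 1) (Sset V C)"
    using assms(4) by (auto simp: ruling_set_def legitimate_def S)
qed

end
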